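(* For the process with internal state described in the context, define $c_S:=\|\nabla^2S\|_\infty$ and $$r(\epsilon):=c_\lambda\epsilon^{k\delta}+c_F\epsilon^{1+\delta}+c_S\epsilon^2,$$ and let $m(t):=t\tau_\epsilon-(\mathrm{Id}-e^{-t\tau_\epsilon^{-1}})\tau_\epsilon^2$, with derivative $m'(t)=\tau_\epsilon(\mathrm{Id}-e^{-t\tau_\epsilon^{-1}})$. Then, for every $n\ge0$, the jump time difference $\Delta T_{n+1}:=T_{n+1}-T_n$ satisfies $$\theta_{n+1}=\lambda_0\Delta T_{n+1}-b^Tm'(\Delta T_{n+1})Z_{T_n}-\epsilon\, b^Tm(\Delta T_{n+1})\nabla S(X_{T_n})\mathcal V_n+(\theta_{n+1}^3+\theta_{n+1})\,\mathcal{O}(r(\epsilon)).$$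
   Context: Model. Let $d,n\ge1$, $\epsilon>0$. $S:\mathbb{R}^d\to\mathbb{R}^n$ is smooth and bounded with bounded first and second derivatives; $\nabla S(x)\in\mathbb{R}^{n\times d}$ is its Jacobian. $\mathcal M$ is a centered probability measure on $\mathbb{S}^{d-1}$. The rate $\lambda:\mathbb{R}^n\to\mathbb{R}$ is smooth with $0<\lambda_{\min}\le\lambda\le\lambda_{\max}$ and $\lambda(z)=\lambda_0-b^Tz+c_\lambda\mathcal{O}(|z|^k)$, $k\ge2$, $b\in\mathbb{R}^n$. $(\theta_n)_{n\ge1}$ i.i.d. mean-1 exponential, $(\mathcal V_n)_{n\ge0}$ i.i.d. with law $\mathcal M$, independent. Process: $T_0=0$, $\frac{\mathrm{d}X_t}{\mathrm{d}t}=\epsilon V_t$, $\frac{\mathrm{d}Y_t}{\mathrm{d}t}=F_\epsilon(Y_t,S(X_t))$, $Z_t:=S(X_t)-Y_t$, $\int_{T_n}^{T_{n+1}}\lambda(Z_t)\mathrm{d}t=\theta_{n+1}$, $V_t=\mathcal V_n$ on $[T_n,T_{n+1})$. Notation: $\mathcal{O}(\cdot)$ is a deterministic globally Lipschitz function vanishing at $0$ with Lipschitz constant uniform in $\epsilon$; $C$ denotes constants independent of $\epsilon$. Fix $\delta>1/k$. Assumptions: (A1) $F_\epsilon(y,s)=-\tau_\epsilon^{-1}(y-s)+\epsilon^{1-\delta}c_F\mathcal{O}(|s-y|^2)$, $\tau_\epsilon$ invertible constant $n\times n$ matrix. (A2) $\|e^{-t\tau_\epsilon^{-1}}\|\le Ce^{-t\epsilon^{1-\delta}/C}$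 for $t\ge0$. (A3) $\sup_{t\ge0}\|t\tau_\epsilon^{-1}e^{-t\tau_\epsilon^{-1}}\|\le C\epsilon^{-1}$. (A4) For any process $S_t$ with $\sup_t|\mathrm{d}S_t/\mathrm{d}t|=\mathcal{O}(\epsilon)$ and $|S_0-Y_0|=\mathcal{O}(\epsilon^\delta)$, the solution of $\mathrm{d}Y_t/\mathrm{d}t=F_\epsilon(Y_t,S_t)$ satisfies $\sup_t|Y_t-S_t|=\mathcal{O}(\epsilon^\delta)$. Initial conditions: $|Z_0|=\mathcal{O}(\epsilon^\delta)$, $|\tau_\epsilon^{-1}Z_0|=\mathcal{O}(1)$. *)

theory Defs
  imports "HOL-Analysis.Analysis"
begin

primrec matpow :: "real^'n^'n \<Rightarrow> nat \<Rightarrow> real^'n^'n" where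
  "matpow A 0 = mat 1"
| "matpow A (Suc k) = A ** matpow A k"

definition mexp :: "real^'n^'n \<Rightarrow> real^'n^'n" where
  "mexp A = (\<Sum>k. (1 / fact k) *\<^sub>R matpow A k)"

definition opnorm :: "real^'m^'n \<Rightarrow> real" where
  "opnorm A = onorm (\<lambda>x. A *v x)"

fun iter_dir :: "'a::real_normed_vector list \<Rightarrow> ('a \<Rightarrow> 'b::real_normed_vector) \<Rightarrow> 'a \<Rightarrow> 'b" where
  "iter_dir [] f = f"
| "iter_dir (v # vs) f = (\<lambda>x. vector_derivative (\<lambda>s::real. iter_dir vs f (x + s *\<^sub>R v)) (at 0))"

definition smooth_map :: "('a::euclidean_space \<Rightarrow> 'b::euclidean_space) \<Rightarrow> bool" where
  "smooth_map f \<longleftrightarrow>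
     (\<forall>vs. continuous_on UNIV (iter_dir vs f)) \<and>
     (\<forall>vs v x. ((\<lambda>s::real. iter_dir vs f (x + s *\<^sub>R v))
                  has_vector_derivative iter_dir (v # vs) f x) (at 0))"

definition mfun :: "real^'n^'n \<Rightarrow> real \<Rightarrow> real^'n^'n" where
  "mfun \<tau> t = t *\<^sub>R \<tau> - (mat 1 - mexp (- (t *\<^sub>R matrix_inv \<tau>))) ** \<tau> ** \<tau>"

definition dmfun :: "real^'n^'n \<Rightarrow> real \<Rightarrow> real^'n^'n" where
  "dmfun \<tau> t = \<tau> ** (mat 1 - mexp (- (t *\<^sub>R matrix_inv \<tau>)))"

text \<open>One realisation of the process for a given epsilon:
  jump times T, velocities Vs (Vs n = script-V_n), exponential clocks th (th (Suc n) = theta_{n+1}),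
  positions X and internal state Y.  Z t = S (X t) - Y t.\<close>
definition is_path ::
  "real \<Rightarrow> (real^'d::finite \<Rightarrow> real^'n::finite) \<Rightarrow> (real^'n \<Rightarrow> real^'n \<Rightarrow> real^'n)
   \<Rightarrow> (real^'n \<Rightarrow> real) \<Rightarrow> (nat \<Rightarrow> real) \<Rightarrow> (nat \<Rightarrow> real^'d) \<Rightarrow> (nat \<Rightarrow> real)
   \<Rightarrow> (real \<Rightarrow> real^'d) \<Rightarrow> (real \<Rightarrow> real^'n) \<Rightarrow> bool" where
  "is_path \<epsilon> S F lam th Vs T X Y \<longleftrightarrow>
     T 0 = 0 \<and> filterlim T at_top sequentially \<and>
     (\<forall>n. th (Suc n) > 0) \<and>
     (\<forall>n. norm (Vs n) = 1) \<and>
     (\<forall>n. T n < T (Suc n)) \<and>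
     (\<forall>n. \<forall>t\<in>{T n..T (Suc n)}.
          (X has_vector_derivative (\<epsilon> *\<^sub>R Vs n)) (at t within {T n..T (Suc n)})) \<and>
     (\<forall>t\<ge>0. (Y has_vector_derivative F (Y t) (S (X t))) (at t within {0..})) \<and>
     (\<forall>n. ((\<lambda>t. lam (S (X t) - Y t)) has_integral th (Suc n)) {T n..T (Suc n)})"

end

theory Submission
  imports Defs
begin

text \<open>
  On a jump interval \<open>[T_n, t]\<close>, \<open>t = T_(n+1)\<close>, the internal state \<open>Z = S(X) - Y\<close> solves
  \<open>Z' = g - \<tau>^-1 Z\<close> with \<open>g = \<epsilon> \<nabla>S(X) V_n + O(\<epsilon>^(1+\<delta>))\<close>, because \<open>|Z| = O(\<epsilon>^\<delta>)\<close> by (A4).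
  Since \<open>m\<close> has derivative \<open>m'\<close> and \<open>m'(u) \<tau>^-1 = Id - e^(-u \<tau>^-1)\<close>, the function
  \<open>\<Phi>(s) = b^T m'(t - s) Z(s) + \<epsilon> b^T m(t - s) \<nabla>S(X_T_n) V_n\<close> vanishes at \<open>s = t\<close> and has
  derivative \<open>-b^T Z + b^T m'(t - s) (g - \<epsilon> \<nabla>S(X_T_n) V_n)\<close>.  Integrating \<open>\<lambda>(Z) - \<lambda>_0 - \<Phi>'\<close>
  over the interval therefore yields exactly the error of the expansion, and the integrand is
  \<open>O(\<epsilon>^(k\<delta>)) + O(\<Delta>T (\<epsilon>^(1+\<delta>) + \<epsilon>^2 \<Delta>T))\<close> because \<open>|m'(u)| \<le> C u\<close> and \<open>\<nabla>S(X)\<close> drifts at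
  rate \<open>O(\<epsilon>)\<close>.  Finally \<open>\<lambda> \<ge> \<lambda>_min\<close> gives \<open>\<Delta>T \<le> \<theta> / \<lambda>_min\<close>, which turns the powers of \<open>\<Delta>T\<close>
  into the factor \<open>\<theta>^3 + \<theta>\<close>.
\<close>

section \<open>Operator norm and products of matrices\<close>

lemma matrix_mul_add_rdistrib: "((A::real^'n^'m) + B) ** (C::real^'p^'n) = A ** C + B ** C"
  by (vector matrix_matrix_mult_def sum.distrib[symmetric] field_simps)

lemma matrix_mul_diff_rdistrib: "((A::real^'n^'m) - B) ** (C::real^'p^'n) = A ** C - B ** C"
  by (vector matrix_matrix_mult_def sum_subtractf[symmetric] field_simps)

lemma matrix_mul_diff_ldistrib: "(A::real^'n^'m) ** (B - C) = A ** B - A ** (C::real^'p^'n)"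
  by (vector matrix_matrix_mult_def sum_subtractf[symmetric] field_simps)

lemma matrix_vector_mult_uminus_left: "(- (A::real^'n^'m)) *v x = - (A *v x)"
  by (vector matrix_vector_mult_def sum_negf[symmetric])

lemma scaleR_matrix_mul_left: "(a *\<^sub>R (A::real^'n^'m)) ** (C::real^'p^'n) = a *\<^sub>R (A ** C)"
  by (vector matrix_matrix_mult_def sum_distrib_left field_simps)

lemma scaleR_matrix_mul_right: "(A::real^'n^'m) ** (a *\<^sub>R (C::real^'p^'n)) = a *\<^sub>R (A ** C)"
  by (vector matrix_matrix_mult_def sum_distrib_left field_simps)

lemma opnorm_nonneg: "0 \<le> opnorm A"
  unfolding opnorm_def by (rule onorm_pos_le) simp

lemma opnorm_eq_0: "opnorm (A::real^'n^'m) = 0 \<longleftrightarrow> A = 0"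
  unfolding opnorm_def by (subst onorm_eq_0) (auto simp: matrix_eq)

lemma opnorm_triangle: "opnorm ((A::real^'n^'m) + B) \<le> opnorm A + opnorm B"
proof -
  have "(*v) (A + B) = (\<lambda>x. A *v x + B *v x)"
    by (rule ext) (simp add: matrix_vector_mult_add_rdistrib)
  then show ?thesis
    using onorm_triangle[OF matrix_vector_mul_bounded_linear matrix_vector_mul_bounded_linear, of A B]
    by (simp add: opnorm_def)
qed

lemma opnorm_scaleR: "opnorm (a *\<^sub>R (A::real^'n^'m)) = \<bar>a\<bar> * opnorm A"
  unfolding opnorm_def
  using onorm_scaleR[OF matrix_vector_mul_bounded_linear, of a A]
  by (simp add: scaleR_matrix_vector_assoc)

lemma opnorm_matrix_mul_le: "opnorm ((A::real^'n^'m) ** (B::real^'p^'n)) \<le> opnorm A * opnorm B"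
  unfolding opnorm_def
  using onorm_compose[OF matrix_vector_mul_bounded_linear matrix_vector_mul_bounded_linear, of A B]
  by (simp add: o_def matrix_vector_mul_assoc)

lemma opnorm_mat_1: "opnorm (mat 1 :: real^'n^'n) = 1"
proof -
  have "(*v) (mat 1 :: real^'n^'n) = (\<lambda>x. x)" by (rule ext) simp
  then show ?thesis unfolding opnorm_def using onorm_id by simp
qed

lemma norm_matrix_vector_mult_le: "norm ((A::real^'n^'m) *v x) \<le> opnorm A * norm x"
  unfolding opnorm_def by (rule onorm) simp

lemma norm_le_opnorm: "norm (A::real^'n^'m) \<le> real CARD('m) * real CARD('n) * opnorm A"
proof -
  have "norm A = L2_set (\<lambda>i. norm (A$i)) UNIV" by (simp add: norm_vec_def)
  also have "\<dots> \<le> (\<Sum>i\<in>UNIV. norm (A$i))" by (rule L2_set_le_sum) simp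
  also have "\<dots> \<le> (\<Sum>i\<in>(UNIV::'m set). \<Sum>j\<in>(UNIV::'n set). \<bar>A$i$j\<bar>)"
    by (rule sum_mono) (rule norm_le_l1_cart)
  also have "\<dots> \<le> (\<Sum>i\<in>(UNIV::'m set). \<Sum>j\<in>(UNIV::'n set). opnorm A)"
    by (intro sum_mono) (simp add: opnorm_def matrix_component_le_onorm)
  finally show ?thesis by simp
qed

lemma opnorm_le_norm: "opnorm (A::real^'n^'m) \<le> real CARD('m) * real CARD('n) * norm A"
  unfolding opnorm_def
proof (rule onorm_le_matrix_component)
  fix i j
  have "\<bar>A$i$j\<bar> \<le> norm (A$i)" by (rule component_le_norm_cart)
  also have "\<dots> \<le> norm A" using Finite_Cartesian_Product.norm_nth_le[of A i] by simp
  finally show "\<bar>A$i$j\<bar> \<le> norm A" .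
qed

lemma bounded_bilinear_matrix_vector_mult:
  "bounded_bilinear (\<lambda>(A::real^'n^'m) (x::real^'n). A *v x)"
proof (rule bounded_bilinear.intro)
  fix A A' :: "real^'n^'m" and x x' :: "real^'n" and r :: real
  show "(A + A') *v x = A *v x + A' *v x" by (simp add: matrix_vector_mult_add_rdistrib)
  show "A *v (x + x') = A *v x + A *v x'" by (simp add: matrix_vector_right_distrib)
  show "(r *\<^sub>R A) *v x = r *\<^sub>R (A *v x)" by (simp add: scaleR_matrix_vector_assoc)
  show "A *v (r *\<^sub>R x) = r *\<^sub>R (A *v x)" by (simp add: matrix_vector_mult_scaleR)
  show "\<exists>K. \<forall>A x. norm ((A::real^'n^'m) *v x) \<le> norm A * norm x * K"
  proof (intro exI allI)
    fix A :: "real^'n^'m" and x :: "real^'n"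
    have "norm (A *v x) \<le> opnorm A * norm x" by (rule norm_matrix_vector_mult_le)
    also have "\<dots> \<le> (real CARD('m) * real CARD('n) * norm A) * norm x"
      by (rule mult_right_mono[OF opnorm_le_norm]) simp
    finally show "norm (A *v x) \<le> norm A * norm x * (real CARD('m) * real CARD('n))"
      by (simp add: ac_simps)
  qed
qed

lemma bounded_bilinear_matrix_mul:
  "bounded_bilinear (\<lambda>(A::real^'n^'m) (B::real^'p^'n). A ** B)"
proof (rule bounded_bilinear.intro)
  fix A A' :: "real^'n^'m" and B B' :: "real^'p^'n" and r :: real
  show "(A + A') ** B = A ** B + A' ** B" by (rule matrix_mul_add_rdistrib)
  show "A ** (B + B') = A ** B + A ** B'" by (rule matrix_add_ldistrib)
  show "(r *\<^sub>R A) ** B = r *\<^sub>R (A ** B)" by (rule scaleR_matrix_mul_left)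
  show "A ** (r *\<^sub>R B) = r *\<^sub>R (A ** B)" by (rule scaleR_matrix_mul_right)
  define c where "c = real CARD('m) * real CARD('p) * (real CARD('m) * real CARD('n))
    * (real CARD('n) * real CARD('p))"
  show "\<exists>K. \<forall>A B. norm ((A::real^'n^'m) ** (B::real^'p^'n)) \<le> norm A * norm B * K"
  proof (intro exI allI)
    fix A :: "real^'n^'m" and B :: "real^'p^'n"
    have "norm (A ** B) \<le> real CARD('m) * real CARD('p) * (opnorm A * opnorm B)"
      using norm_le_opnorm[of "A ** B"] opnorm_matrix_mul_le[of A B]
      by (meson mult_left_mono of_nat_0_le_iff mult_nonneg_nonneg order_trans)
    also have "\<dots> \<le> real CARD('m) * real CARD('p) *
        ((real CARD('m) * real CARD('n) * norm A) * (real CARD('n) * real CARD('p) * norm B))"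
      by (intro mult_left_mono mult_mono opnorm_le_norm opnorm_nonneg) simp_all
    finally show "norm (A ** B) \<le> norm A * norm B * c" by (simp add: c_def ac_simps)
  qed
qed

lemma norm_le_onorm_mult:
  fixes f :: "'a::real_normed_vector \<Rightarrow> 'b::real_normed_vector"
  assumes "\<And>x. norm (f x) \<le> c * norm x"
  shows "norm (f x) \<le> onorm f * norm x"
proof (cases "x = 0")
  case True
  with assms[of x] show ?thesis by (simp only: norm_zero mult_zero_right)
next
  case False
  have "bdd_above (range (\<lambda>x. norm (f x) / norm x))"
    using assms by (intro bdd_aboveI2[where M="max c 0"])
      (simp add: divide_le_eq, meson max.cobounded1 mult_right_mono norm_ge_zero order_trans)
  then have "norm (f x) / norm x \<le> onorm f"
    unfolding onorm_def by (rule cSUP_upper[rotated]) simp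
  with False show ?thesis by (simp add: divide_le_eq)
qed

lemma opnorm_le_Sup_onorm:
  fixes M :: "'a \<Rightarrow> 'b::real_normed_vector \<Rightarrow> real^'d^'n"
  assumes linear: "\<And>x. bounded_linear (M x)"
    and bdd: "\<exists>B. \<forall>x. onorm (\<lambda>h. opnorm (M x h)) \<le> B"
  shows "opnorm (M x h) \<le> (SUP x. onorm (\<lambda>h. opnorm (M x h))) * norm h"
proof -
  obtain K where "\<And>h. norm (M x h) \<le> norm h * K"
    using bounded_linear.bounded[OF linear] by blast
  then have "norm (opnorm (M x h)) \<le> (real CARD('n) * real CARD('d) * K) * norm h" for h
    using opnorm_le_norm[of "M x h"] opnorm_nonneg[of "M x h"]
    by (simp add: mult_left_mono order_trans ac_simps)
  then have "norm (opnorm (M x h)) \<le> onorm (\<lambda>h. opnorm (M x h)) * norm h"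
    by (rule norm_le_onorm_mult)
  then have "opnorm (M x h) \<le> onorm (\<lambda>h. opnorm (M x h)) * norm h"
    using opnorm_nonneg[of "M x h"] by simp
  also have "\<dots> \<le> (SUP x. onorm (\<lambda>h. opnorm (M x h))) * norm h"
    using bdd by (intro mult_right_mono cSUP_upper) (auto intro: bdd_aboveI2)
  finally show ?thesis .
qed

lemma nonneg_of_opnorm_le:
  fixes M :: "real^'d \<Rightarrow> real^'p^'q"
  assumes "\<And>h. opnorm (M h) \<le> c * norm h"
  shows "0 \<le> c"
proof -
  have "(1::real^'d) \<noteq> 0" by (simp add: vec_eq_iff)
  with order_trans[OF opnorm_nonneg assms[of 1]] show ?thesis by (simp add: zero_le_mult_iff)
qed

lemma norm_le_of_vector_derivative_bound:
  fixes f :: "real \<Rightarrow> 'a::banach"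
  assumes "a \<le> b"
    and "\<And>x. x \<in> {a..b} \<Longrightarrow> (f has_vector_derivative f' x) (at x within {a..b})"
    and "\<And>x. x \<in> {a..b} \<Longrightarrow> norm (f' x) \<le> B"
  shows "norm (f b - f a) \<le> B * (b - a)"
proof -
  have "0 \<le> B" using assms(1) assms(3)[of a] by (auto intro: order_trans[OF norm_ge_zero])
  from has_integral_bound_real[OF this finite.emptyI fundamental_theorem_of_calculus[OF assms(1,2)]]
  show ?thesis using assms(1,3) by (simp add: content_real)
qed

lemma has_vector_derivative_compose_has_derivative:
  assumes "(f has_vector_derivative v) (at x within S)" and "(g has_derivative g') (at (f x))"
  shows "((\<lambda>x. g (f x)) has_vector_derivative g' v) (at x within S)"
proof -
  have "((\<lambda>x. g (f x)) has_derivative (\<lambda>h. g' (h *\<^sub>R v))) (at x within S)"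
    using has_derivative_compose[OF assms(1)[unfolded has_vector_derivative_def] assms(2)] .
  moreover have "(\<lambda>h. g' (h *\<^sub>R v)) = (\<lambda>h. h *\<^sub>R g' v)"
    using linear_simps(5)[OF has_derivative_bounded_linear[OF assms(2)]] by auto
  ultimately show ?thesis by (simp add: has_vector_derivative_def)
qed

lemma has_integral_lower_bound_const:
  fixes f :: "real \<Rightarrow> real"
  assumes "(f has_integral I) {a..b}" and "a \<le> b" and "\<And>x. c \<le> f x"
  shows "c * (b - a) \<le> I"
  using has_integral_le[OF has_integral_const_real assms(1)] assms(2,3)
  by (simp add: content_real mult.commute)

lemma power_le_of_rate_bound:
  fixes \<Delta> \<theta> l :: real
  assumes "0 \<le> \<Delta>" and "0 < l" and "l * \<Delta> \<le> \<theta>" and "j \<in> {1, 2, 3}"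
  shows "\<Delta> ^ j \<le> (\<theta> ^ 3 + \<theta>) / l ^ j"
proof -
  have "0 \<le> \<theta>" using assms(1-3) by (meson mult_nonneg_nonneg less_imp_le order_trans)
  have "\<theta> ^ 3 + \<theta> - \<theta> ^ 2 = \<theta> * (\<theta> - 1) ^ 2 + \<theta> ^ 2"
    by (simp add: power2_eq_square power3_eq_cube algebra_simps)
  then have "\<theta> ^ 2 \<le> \<theta> ^ 3 + \<theta>"
    using mult_nonneg_nonneg[OF \<open>0 \<le> \<theta>\<close> zero_le_power2[of "\<theta> - 1"]] zero_le_power2[of \<theta>]
    by linarith
  then have "\<theta> ^ j \<le> \<theta> ^ 3 + \<theta>" using assms(4) \<open>0 \<le> \<theta>\<close> by auto
  have "\<Delta> ^ j \<le> (\<theta> / l) ^ j"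
    using assms by (intro power_mono) (simp_all add: field_simps)
  also have "\<dots> \<le> (\<theta> ^ 3 + \<theta>) / l ^ j"
    using \<open>\<theta> ^ j \<le> \<theta> ^ 3 + \<theta>\<close> \<open>0 < l\<close> by (simp add: power_divide divide_right_mono)
  finally show ?thesis .
qed

lemma cubic_bound_of_rate_bound:
  fixes \<Delta> \<theta> l K1 K2 K3 x1 x2 x3 :: real
  assumes "0 \<le> \<Delta>" and "0 < l" and "l * \<Delta> \<le> \<theta>"
    and "0 \<le> K1" "0 \<le> K2" "0 \<le> K3" and "0 \<le> x1" "0 \<le> x2" "0 \<le> x3"
  shows "(K1 * x1 + (K2 * x2 + K3 * x3 * \<Delta>) * \<Delta>) * \<Delta>
    \<le> (K1 / l + K2 / l ^ 2 + K3 / l ^ 3) * (\<theta> ^ 3 + \<theta>) * (x1 + x2 + x3)"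
proof -
  define P where "P = \<theta> ^ 3 + \<theta>"
  have "0 \<le> \<theta>" using assms(1-3) by (meson mult_nonneg_nonneg less_imp_le order_trans)
  then have "0 \<le> P" by (simp add: P_def)
  have "\<Delta> ^ j \<le> P / l ^ j" if "j \<in> {1, 2, 3}" for j
    unfolding P_def using power_le_of_rate_bound[OF assms(1-3) that] .
  from this[of 1] this[of 2] this[of 3] assms
  have "(K1 * x1) * \<Delta> ^ 1 + (K2 * x2) * \<Delta> ^ 2 + (K3 * x3) * \<Delta> ^ 3
      \<le> (K1 * x1) * (P / l ^ 1) + (K2 * x2) * (P / l ^ 2) + (K3 * x3) * (P / l ^ 3)"
    by (intro add_mono mult_left_mono) auto
  also have "\<dots> = (K1 / l * P) * x1 + (K2 / l ^ 2 * P) * x2 + (K3 / l ^ 3 * P) * x3"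
    by (simp add: mult_ac)
  also have "\<dots> \<le> (K1 / l * P) * (x1 + x2 + x3) + (K2 / l ^ 2 * P) * (x1 + x2 + x3)
      + (K3 / l ^ 3 * P) * (x1 + x2 + x3)"
    using assms \<open>0 \<le> P\<close> by (intro add_mono mult_left_mono) auto
  finally show ?thesis
    by (simp add: P_def power2_eq_square power3_eq_cube algebra_simps)
qed

lemma scaled_power_le_powr:
  fixes c L r C \<epsilon> \<delta> :: real
  assumes "0 \<le> c" and "0 < \<epsilon>" and "0 \<le> r" and "r \<le> C * \<epsilon> powr \<delta>"
  shows "c * L * r ^ k \<le> \<bar>L\<bar> * C ^ k * (c * \<epsilon> powr (real k * \<delta>))"
proof -
  have "c * L * r ^ k \<le> c * \<bar>L\<bar> * r ^ k"
    using assms by (intro mult_right_mono mult_left_mono) auto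
  also have "\<dots> \<le> c * \<bar>L\<bar> * (C * \<epsilon> powr \<delta>) ^ k"
    using assms by (intro mult_left_mono power_mono) auto
  also have "(C * \<epsilon> powr \<delta>) ^ k = C ^ k * \<epsilon> powr (real k * \<delta>)"
    using \<open>0 < \<epsilon>\<close> by (simp add: power_mult_distrib powr_power mult.commute)
  finally show ?thesis by (simp add: ac_simps)
qed

section \<open>The matrix exponential\<close>

text \<open>Square matrices with the operator norm form a Banach algebra in which \<open>mexp\<close> coincides
  with the library's \<open>exp\<close>; this gives access to its derivative.\<close>

typedef ('n::finite) sqmat = "UNIV :: (real^'n^'n) set" by simp

setup_lifting type_definition_sqmat

instantiation sqmat :: (finite) ring_1
begin
lift_definition zero_sqmat :: "'a sqmat" is "0" .
lift_definition one_sqmat :: "'a sqmat" is "mat 1" .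
lift_definition plus_sqmat :: "'a sqmat \<Rightarrow> 'a sqmat \<Rightarrow> 'a sqmat" is "(+)" .
lift_definition minus_sqmat :: "'a sqmat \<Rightarrow> 'a sqmat \<Rightarrow> 'a sqmat" is "(-)" .
lift_definition uminus_sqmat :: "'a sqmat \<Rightarrow> 'a sqmat" is "uminus" .
lift_definition times_sqmat :: "'a sqmat \<Rightarrow> 'a sqmat \<Rightarrow> 'a sqmat" is "(**)" .
instance
proof
  fix a b c :: "'a sqmat"
  show "a * b * c = a * (b * c)" by transfer (simp add: matrix_mul_assoc)
  show "1 * a = a" by transfer simp
  show "a * 1 = a" by transfer simp
  show "(a + b) * c = a * c + b * c" by transfer (rule matrix_mul_add_rdistrib)
  show "a * (b + c) = a * b + a * c" by transfer (rule matrix_add_ldistrib)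
  show "a + b + c = a + (b + c)" by transfer simp
  show "a + b = b + a" by transfer simp
  show "0 + a = a" by transfer simp
  show "- a + a = 0" by transfer simp
  show "a - b = a + - b" by transfer simp
  show "(0::'a sqmat) \<noteq> 1"
    by transfer (metis opnorm_eq_0 opnorm_mat_1 zero_neq_one)
qed
end

instantiation sqmat :: (finite) real_algebra_1
begin
lift_definition scaleR_sqmat :: "real \<Rightarrow> 'a sqmat \<Rightarrow> 'a sqmat" is "scaleR" .
instance
proof
  fix x y :: "'a sqmat" and a b :: real
  show "a *\<^sub>R (x + y) = a *\<^sub>R x + a *\<^sub>R y" by transfer (simp add: scaleR_right_distrib)
  show "(a + b) *\<^sub>R x = a *\<^sub>R x + b *\<^sub>R x" by transfer (simp add: scaleR_left_distrib)
  show "a *\<^sub>R b *\<^sub>R x = (a * b) *\<^sub>R x" by transfer simp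
  show "1 *\<^sub>R x = x" by transfer simp
  show "a *\<^sub>R x * y = a *\<^sub>R (x * y)" by transfer (rule scaleR_matrix_mul_left)
  show "x * a *\<^sub>R y = a *\<^sub>R (x * y)" by transfer (rule scaleR_matrix_mul_right)
qed
end

instantiation sqmat :: (finite) real_normed_algebra_1
begin
lift_definition norm_sqmat :: "'a sqmat \<Rightarrow> real" is opnorm .
definition dist_sqmat :: "'a sqmat \<Rightarrow> 'a sqmat \<Rightarrow> real" where "dist_sqmat x y = norm (x - y)"
definition sgn_sqmat :: "'a sqmat \<Rightarrow> 'a sqmat" where "sgn_sqmat x = x /\<^sub>R norm x"
definition uniformity_sqmat :: "('a sqmat \<times> 'a sqmat) filter" where
  "uniformity_sqmat = (INF e\<in>{0 <..}. principal {(x, y). dist x y < e})"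
definition open_sqmat :: "'a sqmat set \<Rightarrow> bool" where
  "open_sqmat U \<longleftrightarrow> (\<forall>x\<in>U. eventually (\<lambda>(x', y). x' = x \<longrightarrow> y \<in> U) uniformity)"
instance
proof
  fix x y :: "'a sqmat" and a :: real and U :: "'a sqmat set"
  show "dist x y = norm (x - y)" by (simp add: dist_sqmat_def)
  show "sgn x = x /\<^sub>R norm x" by (simp add: sgn_sqmat_def)
  show "(uniformity :: ('a sqmat \<times> 'a sqmat) filter) = (INF e\<in>{0 <..}. principal {(x, y). dist x y < e})"
    by (simp add: uniformity_sqmat_def)
  show "open U \<longleftrightarrow> (\<forall>x\<in>U. eventually (\<lambda>(x', y). x' = x \<longrightarrow> y \<in> U) uniformity)"
    by (simp add: open_sqmat_def)
  show "(norm x = 0) = (x = 0)" by transfer (rule opnorm_eq_0)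
  show "norm (x + y) \<le> norm x + norm y" by transfer (rule opnorm_triangle)
  show "norm (a *\<^sub>R x) = \<bar>a\<bar> * norm x" by transfer (rule opnorm_scaleR)
  show "norm (x * y) \<le> norm x * norm y" by transfer (rule opnorm_matrix_mul_le)
  show "norm (1::'a sqmat) = 1" by transfer (rule opnorm_mat_1)
qed
end

lemma bounded_linear_Rep_sqmat: "bounded_linear (Rep_sqmat :: 'n::finite sqmat \<Rightarrow> real^'n^'n)"
proof (rule bounded_linear_intro[where K="real CARD('n) * real CARD('n)"])
  fix x y :: "'n sqmat" and r :: real
  show "Rep_sqmat (x + y) = Rep_sqmat x + Rep_sqmat y" by (simp add: plus_sqmat.rep_eq)
  show "Rep_sqmat (r *\<^sub>R x) = r *\<^sub>R Rep_sqmat x" by (simp add: scaleR_sqmat.rep_eq)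
  show "norm (Rep_sqmat x) \<le> norm x * (real CARD('n) * real CARD('n))"
    using norm_le_opnorm[of "Rep_sqmat x"] by (simp add: norm_sqmat.rep_eq mult.commute)
qed

lemma bounded_linear_Abs_sqmat: "bounded_linear (Abs_sqmat :: real^'n^'n \<Rightarrow> 'n::finite sqmat)"
proof (rule bounded_linear_intro[where K="real CARD('n) * real CARD('n)"])
  fix x y :: "real^'n^'n" and r :: real
  show "Abs_sqmat (x + y) = Abs_sqmat x + Abs_sqmat y" by (simp add: plus_sqmat.abs_eq)
  show "Abs_sqmat (r *\<^sub>R x) = r *\<^sub>R Abs_sqmat x" by (simp add: scaleR_sqmat.abs_eq)
  show "norm (Abs_sqmat x) \<le> norm x * (real CARD('n) * real CARD('n))"
    using opnorm_le_norm[of x] by (simp add: norm_sqmat.abs_eq mult.commute)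
qed

instance sqmat :: (finite) banach
proof
  fix X :: "nat \<Rightarrow> 'a sqmat"
  assume "Cauchy X"
  then have "Cauchy (\<lambda>i. Rep_sqmat (X i))"
    by (rule bounded_linear.Cauchy[OF bounded_linear_Rep_sqmat])
  then obtain L where "(\<lambda>i. Rep_sqmat (X i)) \<longlonglongrightarrow> L"
    using Cauchy_convergent convergent_def by blast
  then have "(\<lambda>i. Abs_sqmat (Rep_sqmat (X i))) \<longlonglongrightarrow> Abs_sqmat L"
    by (rule bounded_linear.tendsto[OF bounded_linear_Abs_sqmat])
  then show "convergent X" by (auto simp: convergent_def Rep_sqmat_inverse)
qed

lemma Rep_sqmat_power: "Rep_sqmat (x ^ k) = matpow (Rep_sqmat x) k"
  by (induct k) (simp_all add: one_sqmat.rep_eq times_sqmat.rep_eq)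

lemma mexp_eq_exp: "mexp A = Rep_sqmat (exp (Abs_sqmat A))"
proof -
  have "Rep_sqmat (exp (Abs_sqmat A)) = (\<Sum>k. Rep_sqmat (Abs_sqmat A ^ k /\<^sub>R fact k))"
    unfolding exp_def
    by (rule bounded_linear.suminf[OF bounded_linear_Rep_sqmat summable_exp_generic])
  also have "\<dots> = mexp A"
    by (simp add: mexp_def scaleR_sqmat.rep_eq Rep_sqmat_power Abs_sqmat_inverse
        divide_inverse_commute)
  finally show ?thesis by simp
qed

lemma mexp_neg_scaleR_eq_exp: "mexp (- (u *\<^sub>R A)) = Rep_sqmat (exp (u *\<^sub>R - Abs_sqmat A))"
proof -
  have "Abs_sqmat (- (u *\<^sub>R A)) = u *\<^sub>R - Abs_sqmat A"
    by (simp add: Rep_sqmat_inject[symmetric] Abs_sqmat_inverse scaleR_sqmat.rep_eq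
        uminus_sqmat.rep_eq)
  then show ?thesis by (simp add: mexp_eq_exp)
qed

lemma mexp_zero: "mexp 0 = mat 1"
  by (simp add: mexp_eq_exp zero_sqmat.abs_eq[symmetric] one_sqmat.rep_eq)

lemma mexp_neg_scaleR_commute: "mexp (- (u *\<^sub>R A)) ** A = A ** mexp (- (u *\<^sub>R A))"
proof -
  have "exp (u *\<^sub>R - Abs_sqmat A) * Abs_sqmat A = Abs_sqmat A * exp (u *\<^sub>R - Abs_sqmat A)"
    using exp_times_scaleR_commute[of u "- Abs_sqmat A"] by simp
  then have "Rep_sqmat (exp (u *\<^sub>R - Abs_sqmat A) * Abs_sqmat A)
      = Rep_sqmat (Abs_sqmat A * exp (u *\<^sub>R - Abs_sqmat A))"
    by simp
  then show ?thesis
    by (simp add: mexp_neg_scaleR_eq_exp times_sqmat.rep_eq Abs_sqmat_inverse)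
qed

lemma has_vector_derivative_mexp_neg_scaleR:
  "((\<lambda>u. mexp (- (u *\<^sub>R A))) has_vector_derivative - (A ** mexp (- (u *\<^sub>R A)))) (at u within S)"
proof -
  have "((\<lambda>u. Rep_sqmat (exp (u *\<^sub>R - Abs_sqmat A))) has_vector_derivative
      Rep_sqmat (exp (u *\<^sub>R - Abs_sqmat A) * - Abs_sqmat A)) (at u within S)"
    by (rule bounded_linear.has_vector_derivative[OF bounded_linear_Rep_sqmat
          exp_scaleR_has_vector_derivative_right])
  moreover have "Rep_sqmat (exp (u *\<^sub>R - Abs_sqmat A) * - Abs_sqmat A) = - (A ** mexp (- (u *\<^sub>R A)))"
    using mexp_neg_scaleR_commute[of u A]
    by (simp add: mexp_neg_scaleR_eq_exp times_sqmat.rep_eq uminus_sqmat.rep_eq Abs_sqmat_inverse)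
  ultimately show ?thesis by (simp add: mexp_neg_scaleR_eq_exp)
qed

section \<open>The functions \<open>m\<close> and \<open>m'\<close>\<close>

lemma matrix_inv_mul:
  assumes "invertible (\<tau>::real^'n^'n)"
  shows "\<tau> ** matrix_inv \<tau> = mat 1" and "matrix_inv \<tau> ** \<tau> = mat 1"
  using assms unfolding invertible_def matrix_inv_def by (metis (mono_tags, lifting) someI_ex)+

lemma mexp_neg_scaleR_inv_commute:
  assumes "invertible (\<tau>::real^'n^'n)"
  shows "mexp (- (u *\<^sub>R matrix_inv \<tau>)) ** \<tau> = \<tau> ** mexp (- (u *\<^sub>R matrix_inv \<tau>))"
proof -
  let ?A = "matrix_inv \<tau>" and ?E = "mexp (- (u *\<^sub>R matrix_inv \<tau>))"
  have "?E ** \<tau> = (\<tau> ** ?A) ** ?E ** \<tau>" using matrix_inv_mul[OF assms] by simp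
  also have "\<dots> = \<tau> ** (?E ** ?A) ** \<tau>" by (simp add: matrix_mul_assoc mexp_neg_scaleR_commute)
  also have "\<dots> = \<tau> ** ?E ** (?A ** \<tau>)" by (simp add: matrix_mul_assoc)
  finally show ?thesis using matrix_inv_mul[OF assms] by simp
qed

lemma dmfun_mul_matrix_inv:
  assumes "invertible (\<tau>::real^'n^'n)"
  shows "dmfun \<tau> u ** matrix_inv \<tau> = mat 1 - mexp (- (u *\<^sub>R matrix_inv \<tau>))"
proof -
  let ?A = "matrix_inv \<tau>" and ?E = "mexp (- (u *\<^sub>R matrix_inv \<tau>))"
  have "\<tau> ** ?E ** ?A = (\<tau> ** ?A) ** ?E"
    by (simp add: matrix_mul_assoc[symmetric] mexp_neg_scaleR_commute)
  then have "\<tau> ** ?E ** ?A = ?E"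
    using matrix_inv_mul[OF assms] by simp
  then show ?thesis
    using matrix_inv_mul[OF assms]
    by (simp add: dmfun_def matrix_mul_diff_ldistrib matrix_mul_diff_rdistrib)
qed

lemma dmfun_zero [simp]: "dmfun \<tau> 0 = 0"
  by (simp add: dmfun_def mexp_zero)

lemma mfun_zero [simp]: "mfun \<tau> 0 = 0"
  by (simp add: mfun_def mexp_zero)

lemma has_vector_derivative_dmfun:
  assumes "invertible (\<tau>::real^'n^'n)"
  shows "(dmfun \<tau> has_vector_derivative mexp (- (u *\<^sub>R matrix_inv \<tau>))) (at u within S)"
proof -
  have "((\<lambda>u. \<tau> ** (mat 1 - mexp (- (u *\<^sub>R matrix_inv \<tau>)))) has_vector_derivative
      \<tau> ** (0 - - (matrix_inv \<tau> ** mexp (- (u *\<^sub>R matrix_inv \<tau>))))) (at u within S)"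
    by (intro bounded_linear.has_vector_derivative[OF bounded_bilinear.bounded_linear_right[OF
          bounded_bilinear_matrix_mul]] has_vector_derivative_diff has_vector_derivative_const
          has_vector_derivative_mexp_neg_scaleR)
  moreover have "\<tau> ** (matrix_inv \<tau> ** mexp (- (u *\<^sub>R matrix_inv \<tau>))) = mexp (- (u *\<^sub>R matrix_inv \<tau>))"
    using matrix_inv_mul[OF assms] by (metis matrix_mul_assoc matrix_mul_lid)
  ultimately show ?thesis by (simp add: dmfun_def[abs_def])
qed

lemma has_vector_derivative_mfun:
  assumes "invertible (\<tau>::real^'n^'n)"
  shows "(mfun \<tau> has_vector_derivative dmfun \<tau> u) (at u within S)"
proof -
  let ?A = "matrix_inv \<tau>" and ?E = "mexp (- (u *\<^sub>R matrix_inv \<tau>))"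
  have "((\<lambda>u. u *\<^sub>R \<tau>) has_vector_derivative \<tau>) (at u within S)"
    by (auto intro!: derivative_eq_intros)
  moreover have "((\<lambda>u. (mat 1 - mexp (- (u *\<^sub>R ?A))) ** (\<tau> ** \<tau>)) has_vector_derivative
      (0 - - (?A ** ?E)) ** (\<tau> ** \<tau>)) (at u within S)"
    by (intro bounded_linear.has_vector_derivative[OF bounded_bilinear.bounded_linear_left[OF
          bounded_bilinear_matrix_mul]] has_vector_derivative_diff has_vector_derivative_const
          has_vector_derivative_mexp_neg_scaleR)
  ultimately have "((\<lambda>u. u *\<^sub>R \<tau> - (mat 1 - mexp (- (u *\<^sub>R ?A))) ** (\<tau> ** \<tau>))
      has_vector_derivative \<tau> - (?A ** ?E) ** (\<tau> ** \<tau>)) (at u within S)"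
    by (simp add: has_vector_derivative_diff)
  moreover have "(?A ** ?E) ** (\<tau> ** \<tau>) = ?A ** ((?E ** \<tau>) ** \<tau>)"
    by (simp add: matrix_mul_assoc)
  also have "\<dots> = ((?A ** \<tau>) ** ?E) ** \<tau>"
    using mexp_neg_scaleR_inv_commute[OF assms, of u] by (simp add: matrix_mul_assoc)
  ultimately show ?thesis
    using matrix_inv_mul[OF assms] mexp_neg_scaleR_inv_commute[OF assms, of u]
    by (simp add: mfun_def[abs_def] dmfun_def matrix_mul_diff_ldistrib matrix_mul_assoc)
qed

lemma norm_dmfun_mult_le:
  assumes "invertible (\<tau>::real^'n^'n)" and "0 \<le> u"
    and mexp_bdd: "\<And>v. 0 \<le> v \<Longrightarrow> opnorm (mexp (- (v *\<^sub>R matrix_inv \<tau>))) \<le> C"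
  shows "norm (dmfun \<tau> u *v w) \<le> C * norm w * u"
proof -
  have "norm (dmfun \<tau> u *v w - dmfun \<tau> 0 *v w) \<le> (C * norm w) * (u - 0)"
  proof (rule norm_le_of_vector_derivative_bound)
    show "((\<lambda>v. dmfun \<tau> v *v w) has_vector_derivative mexp (- (v *\<^sub>R matrix_inv \<tau>)) *v w)
        (at v within {0..u})" for v
      by (rule bounded_linear.has_vector_derivative[OF bounded_bilinear.bounded_linear_left[OF
            bounded_bilinear_matrix_vector_mult] has_vector_derivative_dmfun[OF assms(1)]])
    show "norm (mexp (- (v *\<^sub>R matrix_inv \<tau>)) *v w) \<le> C * norm w" if "v \<in> {0..u}" for v
      using norm_matrix_vector_mult_le[of "mexp (- (v *\<^sub>R matrix_inv \<tau>))" w] mexp_bdd[of v] that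
      by (meson atLeastAtMost_iff mult_right_mono norm_ge_zero order_trans)
  qed (use assms in auto)
  then show ?thesis by simp
qed

lemma has_vector_derivative_response:
  fixes \<tau> :: "real^'n^'n" and Z g :: "real \<Rightarrow> real^'n"
  assumes inv: "invertible \<tau>"
    and Z_deriv: "(Z has_vector_derivative g s - matrix_inv \<tau> *v Z s) (at s within S)"
  shows "((\<lambda>s. dmfun \<tau> (t - s) *v Z s + mfun \<tau> (t - s) *v w) has_vector_derivative
      dmfun \<tau> (t - s) *v (g s - w) - Z s) (at s within S)"
proof -
  let ?E = "mexp (- ((t - s) *\<^sub>R matrix_inv \<tau>))"
  have "((\<lambda>s. t - s) has_vector_derivative -1) (at s within S)"
    by (auto intro!: derivative_eq_intros simp: has_real_derivative_iff_has_vector_derivative[symmetric])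
  from vector_diff_chain_within[OF this has_vector_derivative_dmfun[OF inv]]
    vector_diff_chain_within[OF this has_vector_derivative_mfun[OF inv]]
  have "((\<lambda>s. dmfun \<tau> (t - s)) has_vector_derivative - ?E) (at s within S)"
    and "((\<lambda>s. mfun \<tau> (t - s)) has_vector_derivative - dmfun \<tau> (t - s)) (at s within S)"
    by (simp_all add: o_def)
  from bounded_bilinear.has_vector_derivative[OF bounded_bilinear_matrix_vector_mult this(1) Z_deriv]
    bounded_bilinear.has_vector_derivative[OF bounded_bilinear_matrix_vector_mult this(2)
      has_vector_derivative_const]
  have "((\<lambda>s. dmfun \<tau> (t - s) *v Z s + mfun \<tau> (t - s) *v w) has_vector_derivative
      dmfun \<tau> (t - s) *v (g s - matrix_inv \<tau> *v Z s) + (- ?E) *v Z s + (- dmfun \<tau> (t - s)) *v w)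
      (at s within S)"
    by (auto intro: has_vector_derivative_add)
  moreover have "dmfun \<tau> (t - s) *v (matrix_inv \<tau> *v Z s) = Z s - ?E *v Z s"
    by (simp add: matrix_vector_mul_assoc dmfun_mul_matrix_inv[OF inv] matrix_vector_mult_diff_rdistrib)
  then have "dmfun \<tau> (t - s) *v (g s - matrix_inv \<tau> *v Z s) + (- ?E) *v Z s + (- dmfun \<tau> (t - s)) *v w
      = dmfun \<tau> (t - s) *v (g s - w) - Z s"
    by (simp add: matrix_vector_mult_diff_distrib matrix_vector_mult_uminus_left)
  ultimately show ?thesis by simp
qed

lemma integrated_rate_expansion:
  fixes \<tau> :: "real^'n^'n" and Z g :: "real \<Rightarrow> real^'n" and lam :: "real^'n \<Rightarrow> real"
  assumes inv: "invertible \<tau>" and "a \<le> t"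
    and mexp_bdd: "\<And>u. 0 \<le> u \<Longrightarrow> opnorm (mexp (- (u *\<^sub>R matrix_inv \<tau>))) \<le> C"
    and Z_deriv: "\<And>s. s \<in> {a..t} \<Longrightarrow>
      (Z has_vector_derivative g s - matrix_inv \<tau> *v Z s) (at s within {a..t})"
    and rate: "((\<lambda>s. lam (Z s)) has_integral \<theta>) {a..t}"
    and linearization: "\<And>s. s \<in> {a..t} \<Longrightarrow> \<bar>lam (Z s) - (l0 - b \<bullet> Z s)\<bar> \<le> \<alpha>"
    and forcing: "\<And>s. s \<in> {a..t} \<Longrightarrow> norm (g s - w) \<le> \<eta>"
  shows "\<bar>\<theta> - (l0 * (t - a) - b \<bullet> (dmfun \<tau> (t - a) *v Z a) - b \<bullet> (mfun \<tau> (t - a) *v w))\<bar>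
    \<le> (\<alpha> + norm b * C * \<eta> * (t - a)) * (t - a)"
proof -
  define \<Phi> where "\<Phi> s = b \<bullet> (dmfun \<tau> (t - s) *v Z s + mfun \<tau> (t - s) *v w)" for s
  have "((\<lambda>s. b \<bullet> (dmfun \<tau> (t - s) *v (g s - w) - Z s)) has_integral \<Phi> t - \<Phi> a) {a..t}"
    unfolding \<Phi>_def using \<open>a \<le> t\<close>
    by (intro fundamental_theorem_of_calculus bounded_linear.has_vector_derivative[OF
          bounded_linear_inner_right] has_vector_derivative_response[OF inv Z_deriv])
  from has_integral_diff[OF rate has_integral_add[OF has_integral_const_real[of l0 a t] this]]
  have "((\<lambda>s. lam (Z s) - (l0 + b \<bullet> (dmfun \<tau> (t - s) *v (g s - w) - Z s)))
      has_integral \<theta> - ((t - a) * l0 + (\<Phi> t - \<Phi> a))) {a..t}"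
    using \<open>a \<le> t\<close> by simp
  moreover have "\<theta> - ((t - a) * l0 + (\<Phi> t - \<Phi> a))
      = \<theta> - (l0 * (t - a) - b \<bullet> (dmfun \<tau> (t - a) *v Z a) - b \<bullet> (mfun \<tau> (t - a) *v w))"
    by (simp add: \<Phi>_def inner_add_right)
  moreover have "lam (Z s) - (l0 + b \<bullet> (dmfun \<tau> (t - s) *v (g s - w) - Z s))
      = lam (Z s) - (l0 - b \<bullet> Z s) - b \<bullet> (dmfun \<tau> (t - s) *v (g s - w))" for s
    by (simp add: inner_diff_right)
  ultimately have integral: "((\<lambda>s. lam (Z s) - (l0 - b \<bullet> Z s) - b \<bullet> (dmfun \<tau> (t - s) *v (g s - w)))
      has_integral \<theta> - (l0 * (t - a) - b \<bullet> (dmfun \<tau> (t - a) *v Z a) - b \<bullet> (mfun \<tau> (t - a) *v w)))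
      {a..t}"
    by simp
  have "0 \<le> C" using mexp_bdd[of 0] by (simp add: mexp_zero opnorm_mat_1)
  have "0 \<le> \<eta>" using forcing[of a] \<open>a \<le> t\<close> by (auto intro: order_trans[OF norm_ge_zero])
  have "0 \<le> \<alpha>" using linearization[of a] \<open>a \<le> t\<close> by (auto intro: order_trans[OF abs_ge_zero])
  have "\<bar>b \<bullet> (dmfun \<tau> (t - s) *v (g s - w))\<bar> \<le> norm b * C * \<eta> * (t - a)" if s: "s \<in> {a..t}" for s
  proof -
    have "norm (dmfun \<tau> (t - s) *v (g s - w)) \<le> C * norm (g s - w) * (t - s)"
      using s by (intro norm_dmfun_mult_le[OF inv _ mexp_bdd]) auto
    also have "\<dots> \<le> C * \<eta> * (t - a)"
      using s forcing[OF s] \<open>0 \<le> C\<close> \<open>0 \<le> \<eta>\<close> by (intro mult_mono) auto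
    finally have "norm b * norm (dmfun \<tau> (t - s) *v (g s - w)) \<le> norm b * (C * \<eta> * (t - a))"
      by (rule mult_left_mono) simp
    from order_trans[OF Cauchy_Schwarz_ineq2 this] show ?thesis by (simp add: ac_simps)
  qed
  then have integrand_bound: "norm (lam (Z s) - (l0 - b \<bullet> Z s) - b \<bullet> (dmfun \<tau> (t - s) *v (g s - w)))
      \<le> \<alpha> + norm b * C * \<eta> * (t - a)" if "s \<in> {a..t} - {}" for s
    using abs_triangle_ineq4[of "lam (Z s) - (l0 - b \<bullet> Z s)"] linearization that
    unfolding real_norm_def by fastforce
  have "0 \<le> \<alpha> + norm b * C * \<eta> * (t - a)"
    using \<open>0 \<le> C\<close> \<open>0 \<le> \<eta>\<close> \<open>0 \<le> \<alpha>\<close> \<open>a \<le> t\<close> by simp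
  from has_integral_bound_real[OF this finite.emptyI integral integrand_bound] \<open>a \<le> t\<close>
  show ?thesis by (simp add: content_real)
qed

section \<open>Sample paths\<close>

lemma jump_time_nonneg:
  assumes "T 0 = (0::real)" and "\<And>n. T n < T (Suc n)"
  shows "0 \<le> T n"
  by (induct n) (use assms in \<open>auto intro: order_trans less_imp_le\<close>)

lemma exists_jump_interval:
  assumes T0: "T 0 = (0::real)" and lim: "filterlim T at_top sequentially" and "0 \<le> t"
  obtains n where "T n \<le> t" and "t < T (Suc n)"
proof -
  obtain N where "t < T N"
    using lim by (auto simp: filterlim_at_top_dense eventually_sequentially)
  define m where "m = (LEAST m. t < T m)"
  have "t < T m" unfolding m_def by (rule LeastI) fact
  moreover have "m \<noteq> 0" using \<open>t < T m\<close> T0 \<open>0 \<le> t\<close> by (metis not_less)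
  then obtain n where "m = Suc n" using not0_implies_Suc by blast
  moreover have "\<not> t < T n" using not_less_Least[of n "\<lambda>m. t < T m"] \<open>m = Suc n\<close> m_def by auto
  ultimately show ?thesis using that not_less by blast
qed

lemma continuous_on_piecewise_differentiable:
  fixes X :: "real \<Rightarrow> 'a::real_normed_vector"
  assumes T0: "T 0 = (0::real)" and inc: "\<And>n. T n < T (Suc n)"
    and lim: "filterlim T at_top sequentially"
    and X_deriv: "\<And>n t. t \<in> {T n..T (Suc n)} \<Longrightarrow>
      (X has_vector_derivative v n) (at t within {T n..T (Suc n)})"
  shows "continuous_on {0..} X"
proof -
  have continuous_initial: "continuous_on {0..T n} X" for n
  proof (induct n)
    case (Suc n)
    have "continuous_on {T n..T (Suc n)} X"
      using X_deriv[of _ n] continuous_on_eq_continuous_within has_vector_derivative_continuous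
      by blast
    moreover have "{0..T (Suc n)} = {0..T n} \<union> {T n..T (Suc n)}"
      using jump_time_nonneg[of T n, OF T0 inc] inc[of n] by auto
    ultimately show ?case using continuous_on_closed_Un[OF _ _ Suc] by simp
  qed (simp add: T0)
  show ?thesis
  proof (clarsimp simp: continuous_on_eq_continuous_within)
    fix t :: real
    assume "0 \<le> t"
    then obtain N where "T N \<le> t" "t < T (Suc N)" using exists_jump_interval[OF T0 lim] by blast
    then have "continuous (at t within {0..T (Suc N)}) X"
      using continuous_initial[of "Suc N"] \<open>0 \<le> t\<close> by (simp add: continuous_on_eq_continuous_within)
    moreover have "at t within {0..} = at t within {0..T (Suc N)}"
      by (rule at_within_nhd[where S="{..<T (Suc N)}"]) (use \<open>t < T (Suc N)\<close> in auto)
    ultimately show "continuous (at t within {0..}) X" by (simp add: continuous_within)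
  qed
qed

lemma has_vector_derivative_right_piecewise:
  fixes X :: "real \<Rightarrow> 'a::real_normed_vector"
  assumes T0: "T 0 = (0::real)" and lim: "filterlim T at_top sequentially"
    and X_deriv: "\<And>n t. t \<in> {T n..T (Suc n)} \<Longrightarrow>
      (X has_vector_derivative v n) (at t within {T n..T (Suc n)})"
    and "0 \<le> t"
  obtains n where "(X has_vector_derivative v n) (at t within {t..})"
proof -
  obtain n where n: "T n \<le> t" "t < T (Suc n)" using exists_jump_interval[OF T0 lim \<open>0 \<le> t\<close>] .
  have "(X has_vector_derivative v n) (at t within {t..T (Suc n)})"
    by (rule has_vector_derivative_within_subset[OF X_deriv]) (use n in auto)
  moreover have "at t within {t..T (Suc n)} = at t within {t..}"
    by (rule at_within_nhd[where S="{..<T (Suc n)}"]) (use n in auto)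
  ultimately show ?thesis using that by auto
qed

lemma state_deviation_bound:
  fixes S :: "real^'d \<Rightarrow> real^'n" and X :: "real \<Rightarrow> real^'d" and Y :: "real \<Rightarrow> real^'n"
  assumes path: "is_path \<epsilon> S F lam th Vs T X Y" and "0 < \<epsilon>"
    and S_deriv: "\<And>x. (S has_derivative (\<lambda>h. DS x *v h)) (at x)"
    and DS_bdd: "\<And>x. opnorm (DS x) \<le> B"
    and tracking: "\<forall>(Sp :: real \<Rightarrow> real^'n) (Yp :: real \<Rightarrow> real^'n).
      continuous_on {0..} Sp \<and>
      (\<forall>t\<ge>0. \<exists>v. (Sp has_vector_derivative v) (at t within {t..}) \<and> norm v \<le> B * \<epsilon>) \<and>
      norm (Sp 0 - Yp 0) \<le> C0 * \<epsilon> powr \<delta> \<and>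
      (\<forall>t\<ge>0. (Yp has_vector_derivative F (Yp t) (Sp t)) (at t within {0..}))
      \<longrightarrow> (\<forall>t\<ge>0. norm (Yp t - Sp t) \<le> C2 * \<epsilon> powr \<delta>)"
    and init: "norm (S (X 0) - Y 0) \<le> C0 * \<epsilon> powr \<delta>"
    and "0 \<le> t"
  shows "norm (S (X t) - Y t) \<le> C2 * \<epsilon> powr \<delta>"
proof -
  have T0: "T 0 = 0" and lim: "filterlim T at_top sequentially" and inc: "\<And>n. T n < T (Suc n)"
    and V_unit: "\<And>n. norm (Vs n) = 1"
    and X_deriv: "\<And>n t. t \<in> {T n..T (Suc n)} \<Longrightarrow>
      (X has_vector_derivative \<epsilon> *\<^sub>R Vs n) (at t within {T n..T (Suc n)})"
    and Y_deriv: "\<And>t. 0 \<le> t \<Longrightarrow> (Y has_vector_derivative F (Y t) (S (X t))) (at t within {0..})"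
    using path unfolding is_path_def by auto
  have "continuous_on UNIV S"
    using S_deriv by (meson continuous_at_imp_continuous_on has_derivative_continuous)
  then have "continuous_on {0..} (\<lambda>t. S (X t))"
    using continuous_on_compose2[OF _ continuous_on_piecewise_differentiable[where v="\<lambda>n. \<epsilon> *\<^sub>R Vs n", OF T0 inc lim X_deriv]]
    by blast
  moreover have "\<exists>v. ((\<lambda>t. S (X t)) has_vector_derivative v) (at t within {t..}) \<and> norm v \<le> B * \<epsilon>"
    if t: "0 \<le> t" for t
  proof -
    obtain m where "(X has_vector_derivative \<epsilon> *\<^sub>R Vs m) (at t within {t..})"
      using has_vector_derivative_right_piecewise[where v="\<lambda>n. \<epsilon> *\<^sub>R Vs n", OF T0 lim X_deriv t] .
    from has_vector_derivative_compose_has_derivative[OF this S_deriv]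
    have "((\<lambda>t. S (X t)) has_vector_derivative DS (X t) *v (\<epsilon> *\<^sub>R Vs m)) (at t within {t..})" .
    moreover have "norm (DS (X t) *v (\<epsilon> *\<^sub>R Vs m)) \<le> B * \<epsilon>"
      using norm_matrix_vector_mult_le[of "DS (X t)" "\<epsilon> *\<^sub>R Vs m"] DS_bdd[of "X t"] V_unit[of m]
        \<open>0 < \<epsilon>\<close>
      by (simp add: mult_right_mono order_trans)
    ultimately show ?thesis by blast
  qed
  ultimately show ?thesis
    using tracking[rule_format, of "\<lambda>t. S (X t)" Y] init Y_deriv \<open>0 \<le> t\<close>
    by (auto simp: norm_minus_commute)
qed

lemma jacobian_variation_bound:
  fixes DS :: "real^'d \<Rightarrow> real^'d^'n" and X :: "real \<Rightarrow> real^'d"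
  assumes DS_deriv: "\<And>x. (DS has_derivative D2S x) (at x)"
    and D2S_bdd: "\<And>x h. opnorm (D2S x h) \<le> c * norm h"
    and "a \<le> s"
    and X_deriv: "\<And>r. r \<in> {a..s} \<Longrightarrow> (X has_vector_derivative v) (at r within {a..s})"
  shows "norm (DS (X s) *v u - DS (X a) *v u) \<le> c * norm v * norm u * (s - a)"
proof (rule norm_le_of_vector_derivative_bound[OF \<open>a \<le> s\<close>])
  fix r assume "r \<in> {a..s}"
  from has_vector_derivative_compose_has_derivative[OF X_deriv[OF this] DS_deriv]
  show "((\<lambda>r. DS (X r) *v u) has_vector_derivative D2S (X r) v *v u) (at r within {a..s})"
    by (rule bounded_linear.has_vector_derivative[OF
          bounded_bilinear.bounded_linear_left[OF bounded_bilinear_matrix_vector_mult]])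
  show "norm (D2S (X r) v *v u) \<le> c * norm v * norm u"
    using norm_matrix_vector_mult_le[of "D2S (X r) v" u] D2S_bdd[of "X r" v]
    by (meson mult_right_mono norm_ge_zero order_trans)
qed

lemma has_vector_derivative_state:
  fixes S :: "real^'d \<Rightarrow> real^'n" and X :: "real \<Rightarrow> real^'d" and Y :: "real \<Rightarrow> real^'n"
  assumes path: "is_path \<epsilon> S F lam th Vs T X Y"
    and S_deriv: "\<And>x. (S has_derivative (\<lambda>h. DS x *v h)) (at x)"
    and s: "s \<in> {T n..T (Suc n)}"
  shows "((\<lambda>s. S (X s) - Y s) has_vector_derivative DS (X s) *v (\<epsilon> *\<^sub>R Vs n) - F (Y s) (S (X s)))
    (at s within {T n..T (Suc n)})"
proof -
  have "0 \<le> T n" using path jump_time_nonneg[of T n] unfolding is_path_def by auto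
  with path s have "(Y has_vector_derivative F (Y s) (S (X s))) (at s within {0..})"
    unfolding is_path_def by auto
  then have Y_deriv: "(Y has_vector_derivative F (Y s) (S (X s))) (at s within {T n..T (Suc n)})"
    by (rule has_vector_derivative_within_subset) (use \<open>0 \<le> T n\<close> in auto)
  have "(X has_vector_derivative \<epsilon> *\<^sub>R Vs n) (at s within {T n..T (Suc n)})"
    using path s unfolding is_path_def by blast
  from has_vector_derivative_compose_has_derivative[OF this S_deriv]
  show ?thesis by (rule has_vector_derivative_diff[OF _ Y_deriv])
qed

lemma jacobian_drift_on_jump_interval:
  fixes DS :: "real^'d \<Rightarrow> real^'d^'n" and X :: "real \<Rightarrow> real^'d"
  assumes path: "is_path \<epsilon> S F lam th Vs T X Y" and "0 < \<epsilon>"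
    and DS_deriv: "\<And>x. (DS has_derivative D2S x) (at x)"
    and D2S_bdd: "\<And>x h. opnorm (D2S x h) \<le> cS * norm h"
    and s: "s \<in> {T n..T (Suc n)}"
  shows "norm (DS (X s) *v (\<epsilon> *\<^sub>R Vs n) - \<epsilon> *\<^sub>R (DS (X (T n)) *v Vs n))
    \<le> \<epsilon> * (cS * \<epsilon> * (T (Suc n) - T n))"
proof -
  have "norm (Vs n) = 1"
    and X_deriv: "\<And>r. r \<in> {T n..T (Suc n)} \<Longrightarrow>
      (X has_vector_derivative \<epsilon> *\<^sub>R Vs n) (at r within {T n..T (Suc n)})"
    using path unfolding is_path_def by auto
  have "(X has_vector_derivative \<epsilon> *\<^sub>R Vs n) (at r within {T n..s})" if "r \<in> {T n..s}" for r
    by (rule has_vector_derivative_within_subset[OF X_deriv]) (use that s in auto)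
  then have "norm (DS (X s) *v Vs n - DS (X (T n)) *v Vs n)
      \<le> cS * norm (\<epsilon> *\<^sub>R Vs n) * norm (Vs n) * (s - T n)"
    using s by (intro jacobian_variation_bound[OF DS_deriv D2S_bdd]) auto
  then have "norm (DS (X s) *v Vs n - DS (X (T n)) *v Vs n) \<le> cS * \<epsilon> * (s - T n)"
    using \<open>norm (Vs n) = 1\<close> \<open>0 < \<epsilon>\<close> by simp
  also have "\<dots> \<le> cS * \<epsilon> * (T (Suc n) - T n)"
    using s \<open>0 < \<epsilon>\<close> nonneg_of_opnorm_le[OF D2S_bdd] by (intro mult_left_mono) auto
  finally show ?thesis
    using \<open>0 < \<epsilon>\<close> mult_left_mono[of _ _ \<epsilon>]
    by (simp add: matrix_vector_mult_scaleR flip: scaleR_diff_right)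
qed

lemma jump_time_expansion_error:
  fixes S :: "real^'d \<Rightarrow> real^'n" and DS :: "real^'d \<Rightarrow> real^'d^'n" and \<tau> :: "real^'n^'n"
    and X :: "real \<Rightarrow> real^'d" and Y :: "real \<Rightarrow> real^'n"
  assumes path: "is_path \<epsilon> S F lam th Vs T X Y" and "0 < \<epsilon>"
    and S_deriv: "\<And>x. (S has_derivative (\<lambda>h. DS x *v h)) (at x)"
    and DS_deriv: "\<And>x. (DS has_derivative D2S x) (at x)"
    and D2S_bdd: "\<And>x h. opnorm (D2S x h) \<le> cS * norm h"
    and inv: "invertible \<tau>"
    and mexp_bdd: "\<And>u. 0 \<le> u \<Longrightarrow> opnorm (mexp (- (u *\<^sub>R matrix_inv \<tau>))) \<le> Ce"
    and F_bdd: "\<And>y s. norm (F y s - (- (matrix_inv \<tau> *v (y - s))))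
      \<le> \<epsilon> powr (1 - \<delta>) * cF * L1 * norm (s - y) ^ 2"
    and lam_bdd: "\<And>z. \<bar>lam z - (l0 - b \<bullet> z)\<bar> \<le> clam * L2 * norm z ^ k"
    and state_bdd: "\<And>t. 0 \<le> t \<Longrightarrow> norm (S (X t) - Y t) \<le> Cz * \<epsilon> powr \<delta>"
    and "0 \<le> clam" and "0 \<le> cF"
  shows "\<bar>th (Suc n) - (l0 * (T (Suc n) - T n) - b \<bullet> (dmfun \<tau> (T (Suc n) - T n) *v (S (X (T n)) - Y (T n)))
      - \<epsilon> * (b \<bullet> (mfun \<tau> (T (Suc n) - T n) *v (DS (X (T n)) *v Vs n))))\<bar>
    \<le> (\<bar>L2\<bar> * Cz ^ k * (clam * \<epsilon> powr (real k * \<delta>))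
      + (norm b * Ce * (\<bar>L1\<bar> * Cz ^ 2) * (cF * \<epsilon> powr (1 + \<delta>))
        + norm b * Ce * (cS * \<epsilon>\<^sup>2) * (T (Suc n) - T n)) * (T (Suc n) - T n)) * (T (Suc n) - T n)"
proof -
  let ?I = "{T n..T (Suc n)}"
  have "T n \<le> T (Suc n)" and "0 \<le> T n"
    and rate: "((\<lambda>s. lam (S (X s) - Y s)) has_integral th (Suc n)) ?I"
    using path jump_time_nonneg[of T] unfolding is_path_def by (auto simp: less_imp_le)
  define Z where "Z s = S (X s) - Y s" for s
  define N where "N s = F (Y s) (S (X s)) - matrix_inv \<tau> *v Z s" for s
  have Z_bdd: "norm (Z s) \<le> Cz * \<epsilon> powr \<delta>" if "s \<in> ?I" for s
    using state_bdd[of s] that \<open>0 \<le> T n\<close> by (simp add: Z_def)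
  have linearization: "\<bar>lam (Z s) - (l0 - b \<bullet> Z s)\<bar> \<le> \<bar>L2\<bar> * Cz ^ k * (clam * \<epsilon> powr (real k * \<delta>))"
    if "s \<in> ?I" for s
    using lam_bdd[of "Z s"] scaled_power_le_powr[where L=L2 and k=k, OF \<open>0 \<le> clam\<close> \<open>0 < \<epsilon>\<close>
        norm_ge_zero Z_bdd[OF that]]
    by linarith
  have nonlinearity: "norm (N s) \<le> \<bar>L1\<bar> * Cz ^ 2 * (cF * \<epsilon> powr (1 + \<delta>))" if "s \<in> ?I" for s
  proof -
    have "\<epsilon> powr (1 - \<delta>) * (\<epsilon> powr (real 2 * \<delta>)) = \<epsilon> powr (1 + \<delta>)"
      by (simp add: powr_add[symmetric] add.commute)
    then show ?thesis
      using F_bdd[of "Y s" "S (X s)"] \<open>0 \<le> cF\<close> \<open>0 < \<epsilon>\<close>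
        scaled_power_le_powr[of "\<epsilon> powr (1 - \<delta>) * cF" \<epsilon> "norm (Z s)" Cz \<delta> L1 2] Z_bdd[OF that]
      by (simp add: N_def Z_def matrix_vector_mult_diff_distrib ac_simps)
  qed
  define g where "g s = DS (X s) *v (\<epsilon> *\<^sub>R Vs n) - N s" for s
  define w where "w = \<epsilon> *\<^sub>R (DS (X (T n)) *v Vs n)"
  have Z_deriv: "(Z has_vector_derivative g s - matrix_inv \<tau> *v Z s) (at s within ?I)" if "s \<in> ?I" for s
    using has_vector_derivative_state[OF path S_deriv that] by (simp add: Z_def[abs_def] g_def N_def)
  have forcing: "norm (g s - w)
      \<le> \<epsilon> * (cS * \<epsilon> * (T (Suc n) - T n)) + \<bar>L1\<bar> * Cz ^ 2 * (cF * \<epsilon> powr (1 + \<delta>))"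
    if "s \<in> ?I" for s
    using jacobian_drift_on_jump_interval[OF path \<open>0 < \<epsilon>\<close> DS_deriv D2S_bdd that] nonlinearity[OF that]
      norm_triangle_ineq4[of "DS (X s) *v (\<epsilon> *\<^sub>R Vs n) - w" "N s"]
    unfolding g_def w_def by (simp add: algebra_simps)
  from integrated_rate_expansion[OF inv \<open>T n \<le> T (Suc n)\<close> mexp_bdd Z_deriv
      rate[unfolded Z_def[symmetric]] linearization forcing]
  have "\<bar>th (Suc n) - (l0 * (T (Suc n) - T n) - b \<bullet> (dmfun \<tau> (T (Suc n) - T n) *v Z (T n))
      - b \<bullet> (mfun \<tau> (T (Suc n) - T n) *v w))\<bar>
    \<le> (\<bar>L2\<bar> * Cz ^ k * (clam * \<epsilon> powr (real k * \<delta>)) + norm b * Ce *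
      (\<epsilon> * (cS * \<epsilon> * (T (Suc n) - T n)) + \<bar>L1\<bar> * Cz ^ 2 * (cF * \<epsilon> powr (1 + \<delta>))) * (T (Suc n) - T n))
      * (T (Suc n) - T n)"
    .
  then show ?thesis
    by (simp add: Z_def w_def matrix_vector_mult_scaleR power2_eq_square algebra_simps)
qed

lemma uniform_state_deviation_bound:
  fixes S :: "real^'d \<Rightarrow> real^'n" and DS :: "real^'d \<Rightarrow> real^'d^'n"
  assumes E_pos: "E \<subseteq> {0<..}"
    and S_deriv: "\<And>x. (S has_derivative (\<lambda>h. DS x *v h)) (at x)"
    and DS_bdd: "\<And>x. opnorm (DS x) \<le> B"
    and tracking: "\<forall>C1 C0. \<exists>C2. \<forall>\<epsilon>\<in>E. \<forall>(Sp :: real \<Rightarrow> real^'n) (Yp :: real \<Rightarrow> real^'n).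
      continuous_on {0..} Sp \<and>
      (\<forall>t\<ge>0. \<exists>v. (Sp has_vector_derivative v) (at t within {t..}) \<and> norm v \<le> C1 * \<epsilon>) \<and>
      norm (Sp 0 - Yp 0) \<le> C0 * \<epsilon> powr \<delta> \<and>
      (\<forall>t\<ge>0. (Yp has_vector_derivative F \<epsilon> (Yp t) (Sp t)) (at t within {0..}))
      \<longrightarrow> (\<forall>t\<ge>0. norm (Yp t - Sp t) \<le> C2 * \<epsilon> powr \<delta>)"
  obtains Cz where "\<And>\<epsilon> th Vs T X Y t. \<epsilon> \<in> E \<Longrightarrow> is_path \<epsilon> S (F \<epsilon>) lam th Vs T X Y \<Longrightarrow>
      norm (S (X 0) - Y 0) \<le> C0 * \<epsilon> powr \<delta> \<Longrightarrow> 0 \<le> t \<Longrightarrow>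
      norm (S (X t) - Y t) \<le> \<bar>Cz\<bar> * \<epsilon> powr \<delta>"
proof -
  from tracking obtain C2 where C2: "\<forall>\<epsilon>\<in>E. \<forall>(Sp :: real \<Rightarrow> real^'n) (Yp :: real \<Rightarrow> real^'n).
      continuous_on {0..} Sp \<and>
      (\<forall>t\<ge>0. \<exists>v. (Sp has_vector_derivative v) (at t within {t..}) \<and> norm v \<le> B * \<epsilon>) \<and>
      norm (Sp 0 - Yp 0) \<le> C0 * \<epsilon> powr \<delta> \<and>
      (\<forall>t\<ge>0. (Yp has_vector_derivative F \<epsilon> (Yp t) (Sp t)) (at t within {0..}))
      \<longrightarrow> (\<forall>t\<ge>0. norm (Yp t - Sp t) \<le> C2 * \<epsilon> powr \<delta>)"
    by blast
  have "norm (S (X t) - Y t) \<le> \<bar>C2\<bar> * \<epsilon> powr \<delta>"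
    if "\<epsilon> \<in> E" and path: "is_path \<epsilon> S (F \<epsilon>) lam th Vs T X Y"
      and "norm (S (X 0) - Y 0) \<le> C0 * \<epsilon> powr \<delta>" and "0 \<le> t" for \<epsilon> th Vs T X Y t
  proof -
    have "norm (S (X t) - Y t) \<le> C2 * \<epsilon> powr \<delta>"
      using that E_pos
      by (intro state_deviation_bound[OF path _ S_deriv DS_bdd bspec[OF C2 \<open>\<epsilon> \<in> E\<close>]]) auto
    also have "\<dots> \<le> \<bar>C2\<bar> * \<epsilon> powr \<delta>" by (intro mult_right_mono) auto
    finally show ?thesis .
  qed
  then show ?thesis by (rule that)
qed

lemma le_of_le_exp_decay:
  fixes C u a x :: real
  assumes "0 < C" and "0 \<le> u" and "0 \<le> a" and "x \<le> C * exp (- u * a / C)"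
  shows "x \<le> C"
proof -
  have "C * exp (- u * a / C) \<le> C * 1"
    using assms by (intro mult_left_mono) (auto simp: divide_nonpos_pos mult_nonpos_nonneg)
  with assms(4) show ?thesis by simp
qed

theorem mainTheorem6:
  fixes S :: "real^'d \<Rightarrow> real^'n"
    and DS :: "real^'d \<Rightarrow> real^'d^'n"
    and D2S :: "real^'d \<Rightarrow> real^'d \<Rightarrow> real^'d^'n"
    and lam :: "real^'n \<Rightarrow> real"
    and l0 lmin lmax clam cF \<delta> C0 C0' :: real
    and b :: "real^'n"
    and k :: nat
    and E :: "real set"
    and \<tau> :: "real \<Rightarrow> real^'n^'n"
    and F :: "real \<Rightarrow> real^'n \<Rightarrow> real^'n \<Rightarrow> real^'n"
  assumes E_pos: "E \<subseteq> {0<..}"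
    and S_smooth: "smooth_map S" and S_bdd: "bounded (range S)"
    and S_deriv: "\<And>x. (S has_derivative (\<lambda>h. DS x *v h)) (at x)"
    and DS_bdd: "\<exists>B. \<forall>x. opnorm (DS x) \<le> B"
    and DS_deriv: "\<And>x. (DS has_derivative D2S x) (at x)"
    and D2S_bdd: "\<exists>B. \<forall>x. onorm (\<lambda>h. opnorm (D2S x h)) \<le> B"
    and lam_smooth: "smooth_map lam"
    and lam_min_pos: "0 < lmin"
    and lam_bounds: "\<And>z. lmin \<le> lam z \<and> lam z \<le> lmax"
    and k_ge: "k \<ge> 2"
    and clam_nonneg: "clam \<ge> 0"
    and lam_expansion: "\<exists>L. \<forall>z. \<bar>lam z - (l0 - b \<bullet> z)\<bar> \<le> clam * L * norm z ^ k"
    and \<delta>_gt: "\<delta> > 1 / real k"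
    and cF_nonneg: "cF \<ge> 0"
    and \<tau>_inv: "\<And>\<epsilon>. \<epsilon> \<in> E \<Longrightarrow> invertible (\<tau> \<epsilon>)"
    and A1: "\<exists>L. \<forall>\<epsilon>\<in>E. \<forall>y s.
               norm (F \<epsilon> y s - (- (matrix_inv (\<tau> \<epsilon>) *v (y - s))))
                 \<le> \<epsilon> powr (1 - \<delta>) * cF * L * norm (s - y) ^ 2"
    and A2: "\<exists>C>0. \<forall>\<epsilon>\<in>E. \<forall>t\<ge>0.
               opnorm (mexp (- (t *\<^sub>R matrix_inv (\<tau> \<epsilon>)))) \<le> C * exp (- t * \<epsilon> powr (1 - \<delta>) / C)"
    and A3: "\<exists>C. \<forall>\<epsilon>\<in>E. \<forall>t\<ge>0.
               opnorm ((t *\<^sub>R matrix_inv (\<tau> \<epsilon>)) ** mexp (- (t *\<^sub>R matrix_inv (\<tau> \<epsilon>)))) \<le> C / \<epsilon>"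
    and A4: "\<forall>C1 C0. \<exists>C2. \<forall>\<epsilon>\<in>E. \<forall>(Sp :: real \<Rightarrow> real^'n) (Yp :: real \<Rightarrow> real^'n).
               continuous_on {0..} Sp \<and>
               (\<forall>t\<ge>0. \<exists>v. (Sp has_vector_derivative v) (at t within {t..}) \<and> norm v \<le> C1 * \<epsilon>) \<and>
               norm (Sp 0 - Yp 0) \<le> C0 * \<epsilon> powr \<delta> \<and>
               (\<forall>t\<ge>0. (Yp has_vector_derivative F \<epsilon> (Yp t) (Sp t)) (at t within {0..}))
               \<longrightarrow> (\<forall>t\<ge>0. norm (Yp t - Sp t) \<le> C2 * \<epsilon> powr \<delta>)"
  shows "\<exists>C. \<forall>\<epsilon>\<in>E. \<forall>th Vs T (X :: real \<Rightarrow> real^'d) (Y :: real \<Rightarrow> real^'n).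
           is_path \<epsilon> S (F \<epsilon>) lam th Vs T X Y \<and>
           norm (S (X 0) - Y 0) \<le> C0 * \<epsilon> powr \<delta> \<and>
           norm (matrix_inv (\<tau> \<epsilon>) *v (S (X 0) - Y 0)) \<le> C0'
           \<longrightarrow> (\<forall>n.
              let cS = (SUP x. onorm (\<lambda>h. opnorm (D2S x h)));
                  r = clam * \<epsilon> powr (real k * \<delta>) + cF * \<epsilon> powr (1 + \<delta>) + cS * \<epsilon>\<^sup>2;
                  \<Delta>T = T (Suc n) - T n;
                  Zn = S (X (T n)) - Y (T n)
              in \<bar>th (Suc n) - (l0 * \<Delta>T - b \<bullet> (dmfun (\<tau> \<epsilon>) \<Delta>T *v Zn)
                     - \<epsilon> * (b \<bullet> (mfun (\<tau> \<epsilon>) \<Delta>T *v (DS (X (T n)) *v Vs n))))\<bar>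
                 \<le> C * (th (Suc n) ^ 3 + th (Suc n)) * r)"
proof -
  obtain B where B: "\<And>x. opnorm (DS x) \<le> B" using DS_bdd by auto
  obtain Cz where state_bdd: "\<And>\<epsilon> th Vs T X Y t. \<epsilon> \<in> E \<Longrightarrow> is_path \<epsilon> S (F \<epsilon>) lam th Vs T X Y \<Longrightarrow>
      norm (S (X 0) - Y 0) \<le> C0 * \<epsilon> powr \<delta> \<Longrightarrow> 0 \<le> t \<Longrightarrow> norm (S (X t) - Y t) \<le> \<bar>Cz\<bar> * \<epsilon> powr \<delta>"
    using uniform_state_deviation_bound[OF E_pos S_deriv B A4] by blast
  obtain L1 where L1: "\<forall>\<epsilon>\<in>E. \<forall>y s. norm (F \<epsilon> y s - (- (matrix_inv (\<tau> \<epsilon>) *v (y - s))))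
      \<le> \<epsilon> powr (1 - \<delta>) * cF * L1 * norm (s - y) ^ 2"
    using A1 by auto
  obtain L2 where L2: "\<And>z. \<bar>lam z - (l0 - b \<bullet> z)\<bar> \<le> clam * L2 * norm z ^ k"
    using lam_expansion by auto
  obtain Ce where "0 < Ce" and Ce: "\<forall>\<epsilon>\<in>E. \<forall>u\<ge>0. opnorm (mexp (- (u *\<^sub>R matrix_inv (\<tau> \<epsilon>))))
      \<le> Ce * exp (- u * \<epsilon> powr (1 - \<delta>) / Ce)"
    using A2 by auto
  define cS where "cS = (SUP x. onorm (\<lambda>h. opnorm (D2S x h)))"
  have D2S_le: "opnorm (D2S x h) \<le> cS * norm h" for x h
    unfolding cS_def by (rule opnorm_le_Sup_onorm[OF has_derivative_bounded_linear[OF DS_deriv] D2S_bdd])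
  show ?thesis
  proof (intro exI[of _ "\<bar>L2\<bar> * \<bar>Cz\<bar> ^ k / lmin + norm b * Ce * (\<bar>L1\<bar> * \<bar>Cz\<bar> ^ 2) / lmin ^ 2
      + norm b * Ce / lmin ^ 3"] ballI allI impI, unfold Let_def cS_def[symmetric])
    fix \<epsilon> th Vs T n and X :: "real \<Rightarrow> real^'d" and Y :: "real \<Rightarrow> real^'n"
    assume "\<epsilon> \<in> E" and H: "is_path \<epsilon> S (F \<epsilon>) lam th Vs T X Y \<and>
      norm (S (X 0) - Y 0) \<le> C0 * \<epsilon> powr \<delta> \<and> norm (matrix_inv (\<tau> \<epsilon>) *v (S (X 0) - Y 0)) \<le> C0'"
    then have path: "is_path \<epsilon> S (F \<epsilon>) lam th Vs T X Y" and "0 < \<epsilon>" using E_pos by auto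
    then have "0 \<le> T (Suc n) - T n"
      and rate: "((\<lambda>t. lam (S (X t) - Y t)) has_integral th (Suc n)) {T n..T (Suc n)}"
      unfolding is_path_def by (auto simp: less_imp_le)
    then have "lmin * (T (Suc n) - T n) \<le> th (Suc n)"
      using has_integral_lower_bound_const[OF rate] lam_bounds by simp
    have mexp_le: "opnorm (mexp (- (u *\<^sub>R matrix_inv (\<tau> \<epsilon>)))) \<le> Ce" if "0 \<le> u" for u
      using le_of_le_exp_decay[OF \<open>0 < Ce\<close> that powr_ge_zero] Ce \<open>\<epsilon> \<in> E\<close> that by blast
    have "norm (S (X 0) - Y 0) \<le> C0 * \<epsilon> powr \<delta>" using H by blast
    note error = jump_time_expansion_error[OF path \<open>0 < \<epsilon>\<close> S_deriv DS_deriv D2S_le \<tau>_inv[OF \<open>\<epsilon> \<in> E\<close>]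
        mexp_le L1[rule_format, OF \<open>\<epsilon> \<in> E\<close>] L2 state_bdd[OF \<open>\<epsilon> \<in> E\<close> path this] clam_nonneg cF_nonneg]
    show "\<bar>th (Suc n) - (l0 * (T (Suc n) - T n) - b \<bullet> (dmfun (\<tau> \<epsilon>) (T (Suc n) - T n) *v (S (X (T n)) - Y (T n)))
        - \<epsilon> * (b \<bullet> (mfun (\<tau> \<epsilon>) (T (Suc n) - T n) *v (DS (X (T n)) *v Vs n))))\<bar>
      \<le> (\<bar>L2\<bar> * \<bar>Cz\<bar> ^ k / lmin + norm b * Ce * (\<bar>L1\<bar> * \<bar>Cz\<bar> ^ 2) / lmin ^ 2 + norm b * Ce / lmin ^ 3)
        * (th (Suc n) ^ 3 + th (Suc n))
        * (clam * \<epsilon> powr (real k * \<delta>) + cF * \<epsilon> powr (1 + \<delta>) + cS * \<epsilon>\<^sup>2)"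
      by (rule order_trans[OF error cubic_bound_of_rate_bound[OF \<open>0 \<le> T (Suc n) - T n\<close> lam_min_pos
            \<open>lmin * (T (Suc n) - T n) \<le> th (Suc n)\<close>]])
        (use \<open>0 < Ce\<close> nonneg_of_opnorm_le[OF D2S_le] clam_nonneg cF_nonneg in simp_all)
  qed
qed

end
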